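(* Let $(\mathcal{C},P)$ be a primary doctrine with comprehension and negation. Then: (i) $(\mathcal{C},P)$ has co-comprehension, given by $\lceil\alpha\rceil:=\lfloor\neg\alpha\rfloor:\{\neg\alpha\}\to A$; (ii) if $(\mathcal{C},P)$ is a restricted $\Sigma(\mathcal{C}_P)$-doctrine, then it is also a restricted $\Sigma(\mathcal{C}_P^o)$-doctrine; (iii) if $(\mathcal{C},P)$ has full comprehension, then $(\mathcal{C},P)$ has full co-comprehension if and only if it is classical.
   Context: A doctrine is a pair $(\mathcal{C},P)$, $\mathcal{C}$ a category with finite products, $P:\mathcal{C}^{op}\to\mathbf{Pos}$ a functor, $f^*=P(f)$; primary means each $P(A)$ has binary meets preserved by each $f^*$. It has negation if each $P(A)$ has a bottom $\bot_A$ and an operation $\neg:P(A)\to P(A)$ with $\alpha\le\neg\beta$ iff $\alpha\wedge\beta=\bot_A$; reindexing maps are understood to preserve top, bottom and negation ($f^*\neg\alpha=\neg f^*\alpha$). It is classical if moreover $\neg\neg\alpha=\alpha$. Comprehension: every $P(A)$ has a top $\top_A$ and for each $\alpha\in P(A)$ there is $\lfloor\alpha\rfloor:\{\alpha\}\to A$ with $\lfloor\alpha\rfloor^*\alpha=\top$ such that every $f:Y\to A$ with $f^*\alpha=\top_Y$ factors uniquely through $\lfloor\alpha\rfloor$; full if whenever $\lfloor\alpha\rfloor$ factors through $\lfloor\beta\rfloor$ then $\alpha\le\beta$. Co-comprehension: every $P(A)$ has a bottom $\bot_A$ and for each $\alpha\in P(A)$ there is $\lceil\alpha\rceil:\{\alpha\}^o\to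 A$ with $\lceil\alpha\rceil^*\alpha=\bot$ such that every $f:Y\to A$ with $f^*\alpha=\bot_Y$ factors uniquely as $f=\lceil\alpha\rceil k$; these arrows are monic and $\alpha\le\beta$ implies $\lceil\beta\rceil$ factors through $\lceil\alpha\rceil$; co-comprehension is full if conversely whenever $\lceil\beta\rceil$ factors through $\lceil\alpha\rceil$ then $\alpha\le\beta$. $\mathcal{C}_P$ (resp. $\mathcal{C}_P^o$) is the pullback-stable class of arrows of the form $\lfloor\alpha\rfloor$ (resp. $\lceil\alpha\rceil$). For a pullback-stable class $\mathcal{A}$, a restricted $\Sigma(\mathcal{A})$-doctrine is one where each $f^*$ with $f:A\to B$ in $\mathcal{A}$ has a left adjoint $\Sigma_f$ (i.e. $\alpha\le f^*\Sigma_f\alpha$, $\Sigma_ff^*\beta\le\beta$) and for every pullback square $h\circ g=f\circ k$ and every $\xi\in P(B)$, $h^*\Sigma_ff^*\xi=\Sigma_gk^*f^*\xi$. *)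

theory Defs
  imports Main
begin

text \<open>A category is given by objects of type 'o, arrows of type 'a (every element of
 'a is an arrow), domain/codomain, composition (comp g f = g after f, defined when
 cod f = dom g) and identities.  A functor P : C^op -> Pos is given by a carrier
 set PA A of type 'p for each object, a partial order le A on it, and reindexing
 re f : P(cod f) -> P(dom f).\<close>

record ('o, 'a, 'p) doctrine =
  dm   :: "'a \<Rightarrow> 'o"
  cd   :: "'a \<Rightarrow> 'o"
  comp :: "'a \<Rightarrow> 'a \<Rightarrow> 'a"
  idt  :: "'o \<Rightarrow> 'a"
  PA   :: "'o \<Rightarrow> 'p set"
  le   :: "'o \<Rightarrow> 'p \<Rightarrow> 'p \<Rightarrow> bool"
  re   :: "'a \<Rightarrow> 'p \<Rightarrow> 'p"

definition is_category :: "('o,'a,'p,'x) doctrine_scheme \<Rightarrow> bool" where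
  "is_category D \<longleftrightarrow>
     (\<forall>A. dm D (idt D A) = A \<and> cd D (idt D A) = A) \<and>
     (\<forall>f g. cd D f = dm D g \<longrightarrow> dm D (comp D g f) = dm D f \<and> cd D (comp D g f) = cd D g) \<and>
     (\<forall>f. comp D f (idt D (dm D f)) = f \<and> comp D (idt D (cd D f)) f = f) \<and>
     (\<forall>f g h. cd D f = dm D g \<longrightarrow> cd D g = dm D h \<longrightarrow>
         comp D h (comp D g f) = comp D (comp D h g) f)"

definition has_finite_products :: "('o,'a,'p,'x) doctrine_scheme \<Rightarrow> bool" where
  "has_finite_products D \<longleftrightarrow>
     (\<exists>T. \<forall>X. \<exists>!t. dm D t = X \<and> cd D t = T) \<and>
     (\<forall>A B. \<exists>Q p1 p2. dm D p1 = Q \<and> cd D p1 = A \<and> dm D p2 = Q \<and> cd D p2 = B \<and>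
        (\<forall>f g. dm D f = dm D g \<and> cd D f = A \<and> cd D g = B \<longrightarrow>
           (\<exists>!h. dm D h = dm D f \<and> cd D h = Q \<and> comp D p1 h = f \<and> comp D p2 h = g)))"

definition is_functor_to_Pos :: "('o,'a,'p,'x) doctrine_scheme \<Rightarrow> bool" where
  "is_functor_to_Pos D \<longleftrightarrow>
     (\<forall>A. (\<forall>x\<in>PA D A. le D A x x) \<and>
          (\<forall>x\<in>PA D A. \<forall>y\<in>PA D A. \<forall>z\<in>PA D A. le D A x y \<longrightarrow> le D A y z \<longrightarrow> le D A x z) \<and>
          (\<forall>x\<in>PA D A. \<forall>y\<in>PA D A. le D A x y \<longrightarrow> le D A y x \<longrightarrow> x = y)) \<and>
     (\<forall>f. \<forall>x\<in>PA D (cd D f). re D f x \<in> PA D (dm D f)) \<and>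
     (\<forall>f. \<forall>x\<in>PA D (cd D f). \<forall>y\<in>PA D (cd D f).
          le D (cd D f) x y \<longrightarrow> le D (dm D f) (re D f x) (re D f y)) \<and>
     (\<forall>A. \<forall>x\<in>PA D A. re D (idt D A) x = x) \<and>
     (\<forall>f g. cd D f = dm D g \<longrightarrow> (\<forall>x\<in>PA D (cd D g). re D (comp D g f) x = re D f (re D g x)))"

definition doctrine :: "('o,'a,'p,'x) doctrine_scheme \<Rightarrow> bool" where
  "doctrine D \<longleftrightarrow> is_category D \<and> has_finite_products D \<and> is_functor_to_Pos D"

definition is_meet :: "('o,'a,'p,'x) doctrine_scheme \<Rightarrow> 'o \<Rightarrow> 'p \<Rightarrow> 'p \<Rightarrow> 'p \<Rightarrow> bool" where
  "is_meet D A x y m \<longleftrightarrow> m \<in> PA D A \<and> le D A m x \<and> le D A m y \<and>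
     (\<forall>z\<in>PA D A. le D A z x \<longrightarrow> le D A z y \<longrightarrow> le D A z m)"

definition is_top :: "('o,'a,'p,'x) doctrine_scheme \<Rightarrow> 'o \<Rightarrow> 'p \<Rightarrow> bool" where
  "is_top D A t \<longleftrightarrow> t \<in> PA D A \<and> (\<forall>z\<in>PA D A. le D A z t)"

definition is_bot :: "('o,'a,'p,'x) doctrine_scheme \<Rightarrow> 'o \<Rightarrow> 'p \<Rightarrow> bool" where
  "is_bot D A b \<longleftrightarrow> b \<in> PA D A \<and> (\<forall>z\<in>PA D A. le D A b z)"

definition primary :: "('o,'a,'p,'x) doctrine_scheme \<Rightarrow> bool" where
  "primary D \<longleftrightarrow> doctrine D \<and>
     (\<forall>A. \<forall>x\<in>PA D A. \<forall>y\<in>PA D A. \<exists>m. is_meet D A x y m) \<and>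
     (\<forall>f x y m. x \<in> PA D (cd D f) \<longrightarrow> y \<in> PA D (cd D f) \<longrightarrow> is_meet D (cd D f) x y m \<longrightarrow>
        is_meet D (dm D f) (re D f x) (re D f y) (re D f m))"

definition has_negation :: "('o,'a,'p,'x) doctrine_scheme \<Rightarrow> ('o \<Rightarrow> 'p \<Rightarrow> 'p) \<Rightarrow> bool" where
  "has_negation D neg \<longleftrightarrow>
     (\<forall>A. \<exists>b. is_bot D A b) \<and>
     (\<forall>A. \<forall>a\<in>PA D A. neg A a \<in> PA D A) \<and>
     (\<forall>A. \<forall>a\<in>PA D A. \<forall>b\<in>PA D A.
        le D A a (neg A b) \<longleftrightarrow> (\<forall>m. is_meet D A a b m \<longrightarrow> is_bot D A m)) \<and>
     (\<forall>f b. is_bot D (cd D f) b \<longrightarrow> is_bot D (dm D f) (re D f b)) \<and>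
     (\<forall>f. \<forall>a\<in>PA D (cd D f). re D f (neg (cd D f) a) = neg (dm D f) (re D f a))"

definition classical :: "('o,'a,'p,'x) doctrine_scheme \<Rightarrow> ('o \<Rightarrow> 'p \<Rightarrow> 'p) \<Rightarrow> bool" where
  "classical D neg \<longleftrightarrow> has_negation D neg \<and> (\<forall>A. \<forall>a\<in>PA D A. neg A (neg A a) = a)"

definition factors_through :: "('o,'a,'p,'x) doctrine_scheme \<Rightarrow> 'a \<Rightarrow> 'a \<Rightarrow> bool" where
  "factors_through D f m \<longleftrightarrow> (\<exists>k. dm D k = dm D f \<and> cd D k = dm D m \<and> comp D m k = f)"

definition is_comprehension :: "('o,'a,'p,'x) doctrine_scheme \<Rightarrow> ('o \<Rightarrow> 'p \<Rightarrow> 'a) \<Rightarrow> bool" where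
  "is_comprehension D cmp \<longleftrightarrow>
     (\<forall>A. \<exists>t. is_top D A t) \<and>
     (\<forall>f t. is_top D (cd D f) t \<longrightarrow> is_top D (dm D f) (re D f t)) \<and>
     (\<forall>A. \<forall>a\<in>PA D A. cd D (cmp A a) = A \<and>
        is_top D (dm D (cmp A a)) (re D (cmp A a) a) \<and>
        (\<forall>f. cd D f = A \<and> is_top D (dm D f) (re D f a) \<longrightarrow>
           (\<exists>!k. dm D k = dm D f \<and> cd D k = dm D (cmp A a) \<and> comp D (cmp A a) k = f)))"

definition full_comprehension :: "('o,'a,'p,'x) doctrine_scheme \<Rightarrow> ('o \<Rightarrow> 'p \<Rightarrow> 'a) \<Rightarrow> bool" where
  "full_comprehension D cmp \<longleftrightarrow> is_comprehension D cmp \<and>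
     (\<forall>A. \<forall>a\<in>PA D A. \<forall>b\<in>PA D A. factors_through D (cmp A a) (cmp A b) \<longrightarrow> le D A a b)"

definition is_monic :: "('o,'a,'p,'x) doctrine_scheme \<Rightarrow> 'a \<Rightarrow> bool" where
  "is_monic D m \<longleftrightarrow> (\<forall>u v. cd D u = dm D m \<longrightarrow> cd D v = dm D m \<longrightarrow> dm D u = dm D v \<longrightarrow>
       comp D m u = comp D m v \<longrightarrow> u = v)"

definition is_cocomprehension :: "('o,'a,'p,'x) doctrine_scheme \<Rightarrow> ('o \<Rightarrow> 'p \<Rightarrow> 'a) \<Rightarrow> bool" where
  "is_cocomprehension D cc \<longleftrightarrow>
     (\<forall>A. \<exists>b. is_bot D A b) \<and>
     (\<forall>A. \<forall>a\<in>PA D A. cd D (cc A a) = A \<and>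
        is_bot D (dm D (cc A a)) (re D (cc A a) a) \<and>
        (\<forall>f. cd D f = A \<and> is_bot D (dm D f) (re D f a) \<longrightarrow>
           (\<exists>!k. dm D k = dm D f \<and> cd D k = dm D (cc A a) \<and> comp D (cc A a) k = f)) \<and>
        is_monic D (cc A a)) \<and>
     (\<forall>A. \<forall>a\<in>PA D A. \<forall>b\<in>PA D A. le D A a b \<longrightarrow> factors_through D (cc A b) (cc A a))"

definition full_cocomprehension :: "('o,'a,'p,'x) doctrine_scheme \<Rightarrow> ('o \<Rightarrow> 'p \<Rightarrow> 'a) \<Rightarrow> bool" where
  "full_cocomprehension D cc \<longleftrightarrow> is_cocomprehension D cc \<and>
     (\<forall>A. \<forall>a\<in>PA D A. \<forall>b\<in>PA D A. factors_through D (cc A b) (cc A a) \<longrightarrow> le D A a b)"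

definition is_iso :: "('o,'a,'p,'x) doctrine_scheme \<Rightarrow> 'a \<Rightarrow> bool" where
  "is_iso D i \<longleftrightarrow> (\<exists>j. dm D j = cd D i \<and> cd D j = dm D i \<and>
       comp D j i = idt D (dm D i) \<and> comp D i j = idt D (cd D i))"

text \<open>The class of arrows of the form cls A a (closed under isomorphism over the
 codomain, so that it is pullback-stable).\<close>
definition arrow_class :: "('o,'a,'p,'x) doctrine_scheme \<Rightarrow> ('o \<Rightarrow> 'p \<Rightarrow> 'a) \<Rightarrow> 'a set" where
  "arrow_class D cls = {m. \<exists>A a i. a \<in> PA D A \<and> is_iso D i \<and> cd D i = dm D (cls A a) \<and>
       comp D (cls A a) i = m}"

definition is_pullback :: "('o,'a,'p,'x) doctrine_scheme \<Rightarrow> 'a \<Rightarrow> 'a \<Rightarrow> 'a \<Rightarrow> 'a \<Rightarrow> bool" where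
  "is_pullback D h g f k \<longleftrightarrow>
     cd D g = dm D h \<and> cd D k = dm D f \<and> dm D g = dm D k \<and> cd D h = cd D f \<and>
     comp D h g = comp D f k \<and>
     (\<forall>u v. dm D u = dm D v \<and> cd D u = dm D h \<and> cd D v = dm D f \<and> comp D h u = comp D f v \<longrightarrow>
        (\<exists>!w. dm D w = dm D u \<and> cd D w = dm D g \<and> comp D g w = u \<and> comp D k w = v))"

definition restricted_sigma :: "('o,'a,'p,'x) doctrine_scheme \<Rightarrow> 'a set \<Rightarrow> ('a \<Rightarrow> 'p \<Rightarrow> 'p) \<Rightarrow> bool" where
  "restricted_sigma D Cls sig \<longleftrightarrow>
     (\<forall>f\<in>Cls.
        (\<forall>a\<in>PA D (dm D f). sig f a \<in> PA D (cd D f)) \<and>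
        (\<forall>a\<in>PA D (dm D f). \<forall>b\<in>PA D (dm D f). le D (dm D f) a b \<longrightarrow> le D (cd D f) (sig f a) (sig f b)) \<and>
        (\<forall>a\<in>PA D (dm D f). le D (dm D f) a (re D f (sig f a))) \<and>
        (\<forall>b\<in>PA D (cd D f). le D (cd D f) (sig f (re D f b)) b)) \<and>
     (\<forall>f g h k. f \<in> Cls \<longrightarrow> is_pullback D h g f k \<longrightarrow>
        (\<forall>x\<in>PA D (cd D f). re D h (sig f (re D f x)) = sig g (re D k (re D f x))))"

end

theory Submission
  imports Defs
begin

text \<open>Reindexing preserves negation and \<open>\<not>x\<close> is top exactly when \<open>x\<close> is bottom, so
  \<open>f\<^sup>*\<alpha> = \<bottom>\<close> iff \<open>f\<^sup>*\<not>\<alpha> = \<top>\<close>: the comprehension of \<open>\<not>\<alpha>\<close> is a co-comprehension of \<open>\<alpha>\<close>.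
  Its arrows are comprehension arrows, so \<open>\<C>\<^sub>P\<^sup>o \<subseteq> \<C>\<^sub>P\<close> and the left adjoints restrict.
  For (iii): if \<open>\<lceil>\<beta>\<rceil>\<close> factors through \<open>\<lceil>\<alpha>\<rceil>\<close>, full comprehension gives \<open>\<not>\<beta> \<le> \<not>\<alpha>\<close>, whence
  \<open>\<alpha> \<le> \<beta>\<close> by double negation; conversely, for any full co-comprehension \<open>c\<close>, reindexing along
  \<open>c(\<alpha>)\<close> sends \<open>\<not>\<not>\<alpha>\<close> to bottom, so \<open>c(\<alpha>)\<close> factors through \<open>c(\<not>\<not>\<alpha>)\<close>, and fullness yields \<open>\<not>\<not>\<alpha> \<le> \<alpha>\<close>.\<close>

locale poset_indexed =
  fixes D :: "('o, 'a, 'p, 'x) doctrine_scheme"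
  assumes functor_to_Pos: "is_functor_to_Pos D"
begin

lemma PA_le_refl: "x \<in> PA D A \<Longrightarrow> le D A x x"
  using functor_to_Pos by (simp add: is_functor_to_Pos_def)

lemma PA_le_trans:
  "\<lbrakk>x \<in> PA D A; y \<in> PA D A; z \<in> PA D A; le D A x y; le D A y z\<rbrakk> \<Longrightarrow> le D A x z"
  using functor_to_Pos unfolding is_functor_to_Pos_def by blast

lemma PA_le_antisym: "\<lbrakk>x \<in> PA D A; y \<in> PA D A; le D A x y; le D A y x\<rbrakk> \<Longrightarrow> x = y"
  using functor_to_Pos unfolding is_functor_to_Pos_def by blast

lemma re_in_PA: "x \<in> PA D (cd D f) \<Longrightarrow> re D f x \<in> PA D (dm D f)"
  using functor_to_Pos unfolding is_functor_to_Pos_def by blast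

lemma re_mono:
  "\<lbrakk>x \<in> PA D (cd D f); y \<in> PA D (cd D f); le D (cd D f) x y\<rbrakk>
    \<Longrightarrow> le D (dm D f) (re D f x) (re D f y)"
  using functor_to_Pos unfolding is_functor_to_Pos_def by blast

lemma re_comp: "\<lbrakk>cd D f = dm D g; x \<in> PA D (cd D g)\<rbrakk> \<Longrightarrow> re D (comp D g f) x = re D f (re D g x)"
  using functor_to_Pos unfolding is_functor_to_Pos_def by blast

lemma is_meet_of_le: "\<lbrakk>x \<in> PA D A; y \<in> PA D A; le D A x y\<rbrakk> \<Longrightarrow> is_meet D A x y x"
  unfolding is_meet_def by (simp add: PA_le_refl)

end

locale indexed_negation = poset_indexed D for D :: "('o, 'a, 'p, 'x) doctrine_scheme" +
  fixes neg :: "'o \<Rightarrow> 'p \<Rightarrow> 'p"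
  assumes negation: "has_negation D neg"
begin

lemma neg_in_PA: "a \<in> PA D A \<Longrightarrow> neg A a \<in> PA D A"
  using negation unfolding has_negation_def by blast

lemma le_neg_iff: "\<lbrakk>a \<in> PA D A; b \<in> PA D A\<rbrakk>
    \<Longrightarrow> le D A a (neg A b) \<longleftrightarrow> (\<forall>m. is_meet D A a b m \<longrightarrow> is_bot D A m)"
  using negation unfolding has_negation_def by blast

lemma re_neg: "a \<in> PA D (cd D f) \<Longrightarrow> re D f (neg (cd D f) a) = neg (dm D f) (re D f a)"
  using negation unfolding has_negation_def by blast

lemma le_neg_of_le_bot:
  assumes "a \<in> PA D A" and "b \<in> PA D A" and "\<And>m. \<lbrakk>m \<in> PA D A; le D A m a; le D A m b\<rbrakk> \<Longrightarrow> is_bot D A m"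
  shows "le D A a (neg A b)"
  using assms le_neg_iff unfolding is_meet_def by blast

lemma is_bot_of_le_neg:
  assumes "x \<in> PA D A" and "y \<in> PA D A" and "le D A x (neg A y)" and "le D A x y"
  shows "is_bot D A x"
  using assms le_neg_iff is_meet_of_le by blast

lemma is_top_neg_iff_is_bot:
  assumes xP: "x \<in> PA D A"
  shows "is_top D A (neg A x) \<longleftrightarrow> is_bot D A x"
proof
  assume "is_top D A (neg A x)"
  then show "is_bot D A x"
    using xP is_bot_of_le_neg PA_le_refl by (auto simp: is_top_def)
next
  assume bot: "is_bot D A x"
  have "le D A z (neg A x)" if "z \<in> PA D A" for z
    using le_neg_of_le_bot[OF that xP] bot PA_le_antisym by (metis is_bot_def)
  then show "is_top D A (neg A x)"
    using neg_in_PA[OF xP] by (simp add: is_top_def)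
qed

lemma is_bot_neg_top: "is_top D A t \<Longrightarrow> is_bot D A (neg A t)"
  using is_bot_of_le_neg neg_in_PA PA_le_refl unfolding is_top_def by meson

lemma neg_antimono:
  assumes aP: "a \<in> PA D A" and bP: "b \<in> PA D A" and ab: "le D A a b"
  shows "le D A (neg A b) (neg A a)"
proof (rule le_neg_of_le_bot[OF neg_in_PA[OF bP] aP])
  fix m assume m: "m \<in> PA D A" "le D A m (neg A b)" "le D A m a"
  then have "le D A m b" using PA_le_trans aP bP ab by blast
  then show "is_bot D A m" using is_bot_of_le_neg m bP by blast
qed

lemma le_neg_neg: "a \<in> PA D A \<Longrightarrow> le D A a (neg A (neg A a))"
  using le_neg_of_le_bot is_bot_of_le_neg neg_in_PA by meson

lemma re_neg_is_top_iff:
  "a \<in> PA D (cd D f) \<Longrightarrow> is_top D (dm D f) (re D f (neg (cd D f) a)) \<longleftrightarrow> is_bot D (dm D f) (re D f a)"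
  by (simp add: re_neg is_top_neg_iff_is_bot re_in_PA)

end

lemma comprehension_cd: "\<lbrakk>is_comprehension D cmp; b \<in> PA D A\<rbrakk> \<Longrightarrow> cd D (cmp A b) = A"
  unfolding is_comprehension_def by blast

lemma comprehension_is_top:
  "\<lbrakk>is_comprehension D cmp; b \<in> PA D A\<rbrakk> \<Longrightarrow> is_top D (dm D (cmp A b)) (re D (cmp A b) b)"
  unfolding is_comprehension_def by blast

lemma comprehension_factors_uniquely:
  "\<lbrakk>is_comprehension D cmp; b \<in> PA D A; cd D f = A; is_top D (dm D f) (re D f b)\<rbrakk>
    \<Longrightarrow> \<exists>!k. dm D k = dm D f \<and> cd D k = dm D (cmp A b) \<and> comp D (cmp A b) k = f"
  unfolding is_comprehension_def by blast

lemma comprehension_re_top: "\<lbrakk>is_comprehension D cmp; is_top D (cd D f) t\<rbrakk> \<Longrightarrow> is_top D (dm D f) (re D f t)"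
  unfolding is_comprehension_def by blast

lemma (in poset_indexed) comprehension_monic:
  assumes K: "is_category D" and C: "is_comprehension D cmp"
    and bP: "b \<in> PA D A"
  shows "is_monic D (cmp A b)"
  unfolding is_monic_def
proof (intro allI impI)
  fix u v
  assume u: "cd D u = dm D (cmp A b)" and v: "cd D v = dm D (cmp A b)" and uv: "dm D u = dm D v"
    and eq: "comp D (cmp A b) u = comp D (cmp A b) v"
  let ?f = "comp D (cmp A b) u"
  have dom: "dm D ?f = dm D u" and cod: "cd D ?f = A"
    using K u comprehension_cd[OF C bP] unfolding is_category_def by auto
  have "re D ?f b = re D u (re D (cmp A b) b)"
    using re_comp[OF u] bP comprehension_cd[OF C bP] by simp
  then have "is_top D (dm D ?f) (re D ?f b)"
    using comprehension_re_top[OF C] comprehension_is_top[OF C bP] u dom by metis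
  then show "u = v"
    using comprehension_factors_uniquely[OF C bP cod] dom u v uv eq by metis
qed

context indexed_negation
begin

lemma negated_comprehension_factors:
  assumes K: "is_category D" and C: "is_comprehension D cmp" and aP: "a \<in> PA D A"
  shows "factors_through D f (cmp A (neg A a)) \<longleftrightarrow> cd D f = A \<and> is_bot D (dm D f) (re D f a)"
proof
  assume "factors_through D f (cmp A (neg A a))"
  then obtain k where k: "dm D k = dm D f" "cd D k = dm D (cmp A (neg A a))" "comp D (cmp A (neg A a)) k = f"
    unfolding factors_through_def by blast
  let ?c = "cmp A (neg A a)"
  have cod: "cd D ?c = A" using comprehension_cd[OF C neg_in_PA[OF aP]] .
  have "cd D f = A" using K k cod unfolding is_category_def by metis
  moreover have "re D f (neg A a) = re D k (re D ?c (neg A a))"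
    using re_comp[OF k(2)] k(3) cod neg_in_PA[OF aP] by metis
  then have "is_top D (dm D f) (re D f (neg A a))"
    using comprehension_re_top[OF C] comprehension_is_top[OF C neg_in_PA[OF aP]] k by metis
  ultimately show "cd D f = A \<and> is_bot D (dm D f) (re D f a)"
    using re_neg_is_top_iff aP by metis
next
  assume "cd D f = A \<and> is_bot D (dm D f) (re D f a)"
  then show "factors_through D f (cmp A (neg A a))"
    using comprehension_factors_uniquely[OF C neg_in_PA[OF aP]] re_neg_is_top_iff aP
    unfolding factors_through_def by metis
qed

lemma is_bot_re_negated_comprehension:
  assumes C: "is_comprehension D cmp" and aP: "a \<in> PA D A"
  shows "is_bot D (dm D (cmp A (neg A a))) (re D (cmp A (neg A a)) a)"
proof -
  have cod: "cd D (cmp A (neg A a)) = A" using comprehension_cd[OF C neg_in_PA[OF aP]] .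
  show ?thesis
    using comprehension_is_top[OF C neg_in_PA[OF aP]] re_neg_is_top_iff[of a "cmp A (neg A a)"]
    by (simp add: cod aP)
qed

lemma is_cocomprehension_negated_comprehension:
  assumes K: "is_category D" and C: "is_comprehension D cmp"
  shows "is_cocomprehension D (\<lambda>A a. cmp A (neg A a))"
  unfolding is_cocomprehension_def
proof (intro conjI allI ballI impI)
  fix A show "\<exists>b. is_bot D A b" using negation unfolding has_negation_def by blast
next
  fix A a assume aP: "a \<in> PA D A"
  show "cd D (cmp A (neg A a)) = A" using comprehension_cd[OF C neg_in_PA[OF aP]] .
  show "is_bot D (dm D (cmp A (neg A a))) (re D (cmp A (neg A a)) a)"
    using is_bot_re_negated_comprehension[OF C aP] .
  show "is_monic D (cmp A (neg A a))" using comprehension_monic[OF K C neg_in_PA[OF aP]] .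
  fix f assume f: "cd D f = A \<and> is_bot D (dm D f) (re D f a)"
  then have "is_top D (dm D f) (re D f (neg A a))"
    using re_neg_is_top_iff[of a f] aP by simp
  then show "\<exists>!k. dm D k = dm D f \<and> cd D k = dm D (cmp A (neg A a)) \<and> comp D (cmp A (neg A a)) k = f"
    using comprehension_factors_uniquely[OF C neg_in_PA[OF aP]] f by blast
next
  fix A a b assume aP: "a \<in> PA D A" and bP: "b \<in> PA D A" and ab: "le D A a b"
  let ?c = "cmp A (neg A b)"
  have cod: "cd D ?c = A" using comprehension_cd[OF C neg_in_PA[OF bP]] .
  have "le D (dm D ?c) (re D ?c a) (re D ?c b)" using re_mono[of a ?c b] aP bP ab cod by simp
  moreover have "re D ?c a \<in> PA D (dm D ?c)" using re_in_PA[of a ?c] aP cod by simp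
  moreover note is_bot_re_negated_comprehension[OF C bP]
  ultimately have "is_bot D (dm D ?c) (re D ?c a)"
    using PA_le_antisym unfolding is_bot_def by metis
  then show "factors_through D ?c (cmp A (neg A a))"
    using negated_comprehension_factors[OF K C aP] cod by blast
qed

lemma classical_if_full_cocomprehension:
  assumes CC: "full_cocomprehension D cc"
  shows "classical D neg"
proof -
  have "neg A (neg A a) = a" if aP: "a \<in> PA D A" for A a
  proof -
    let ?c = "cc A a" and ?X = "dm D (cc A a)" and ?nna = "neg A (neg A a)"
    have nnaP: "?nna \<in> PA D A" using neg_in_PA aP by blast
    have cod: "cd D ?c = A" and bot: "is_bot D ?X (re D ?c a)"
      using CC aP unfolding full_cocomprehension_def is_cocomprehension_def by blast+
    have "re D ?c ?nna = neg ?X (neg ?X (re D ?c a))"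
      using re_neg neg_in_PA aP cod by metis
    then have "is_bot D ?X (re D ?c ?nna)"
      using is_bot_neg_top is_top_neg_iff_is_bot bot unfolding is_bot_def by metis
    then have "factors_through D ?c (cc A ?nna)"
      using CC nnaP cod unfolding full_cocomprehension_def is_cocomprehension_def factors_through_def
      by blast
    then have "le D A ?nna a" using CC nnaP aP unfolding full_cocomprehension_def by blast
    then show ?thesis using PA_le_antisym nnaP aP le_neg_neg by blast
  qed
  then show ?thesis using negation unfolding classical_def by blast
qed

lemma full_cocomprehension_negated_comprehension_if_classical:
  assumes K: "is_category D" and C: "full_comprehension D cmp" and classic: "classical D neg"
  shows "full_cocomprehension D (\<lambda>A a. cmp A (neg A a))"
proof -
  have "le D A a b"
    if aP: "a \<in> PA D A" and bP: "b \<in> PA D A"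
      and "factors_through D (cmp A (neg A b)) (cmp A (neg A a))" for A a b
  proof -
    have "le D A (neg A b) (neg A a)"
      using C that neg_in_PA unfolding full_comprehension_def by blast
    then have "le D A (neg A (neg A a)) (neg A (neg A b))"
      using neg_antimono neg_in_PA aP bP by blast
    then show ?thesis using classic aP bP unfolding classical_def by simp
  qed
  then show ?thesis
    using is_cocomprehension_negated_comprehension[OF K] C
    unfolding full_cocomprehension_def full_comprehension_def by blast
qed

end

lemma restricted_sigma_subclass:
  "\<lbrakk>Cls' \<subseteq> Cls; restricted_sigma D Cls sig\<rbrakk> \<Longrightarrow> restricted_sigma D Cls' sig"
  unfolding restricted_sigma_def by blast

lemma arrow_class_reparametrize_subset:
  "(\<And>A a. a \<in> PA D A \<Longrightarrow> g A a \<in> PA D A) \<Longrightarrow> arrow_class D (\<lambda>A a. cls A (g A a)) \<subseteq> arrow_class D cls"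
  unfolding arrow_class_def by blast

theorem mainTheorem4:
  fixes D :: "('o, 'a, 'p) doctrine"
    and neg :: "'o \<Rightarrow> 'p \<Rightarrow> 'p"
    and cmp :: "'o \<Rightarrow> 'p \<Rightarrow> 'a"
  assumes "primary D"
    and "is_comprehension D cmp"
    and "has_negation D neg"
  shows "is_cocomprehension D (\<lambda>A a. cmp A (neg A a))
     \<and> ((\<exists>sig. restricted_sigma D (arrow_class D cmp) sig) \<longrightarrow>
          (\<exists>sig. restricted_sigma D (arrow_class D (\<lambda>A a. cmp A (neg A a))) sig))
     \<and> (full_comprehension D cmp \<longrightarrow>
          ((\<exists>cc. full_cocomprehension D cc) \<longleftrightarrow> classical D neg))"
proof -
  have K: "is_category D" and "is_functor_to_Pos D"
    using \<open>primary D\<close> by (simp_all add: primary_def doctrine_def)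
  then interpret indexed_negation D neg
    using \<open>has_negation D neg\<close> by unfold_locales
  have "arrow_class D (\<lambda>A a. cmp A (neg A a)) \<subseteq> arrow_class D cmp"
    using arrow_class_reparametrize_subset[of D neg cmp] neg_in_PA by blast
  then have "(\<exists>sig. restricted_sigma D (arrow_class D cmp) sig) \<longrightarrow>
      (\<exists>sig. restricted_sigma D (arrow_class D (\<lambda>A a. cmp A (neg A a))) sig)"
    using restricted_sigma_subclass by blast
  moreover have "full_comprehension D cmp \<longrightarrow> ((\<exists>cc. full_cocomprehension D cc) \<longleftrightarrow> classical D neg)"
    using classical_if_full_cocomprehension full_cocomprehension_negated_comprehension_if_classical[OF K]
    by blast
  ultimately show ?thesis
    using is_cocomprehension_negated_comprehension[OF K \<open>is_comprehension D cmp\<close>] by blast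
qed

end
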